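(* Let $n\ge 1$ and let $V^n$ be the $(n+1)\times(n+1)$ matrix $V^n_{ij}=B^n_j(i/n)$, $0\le i,j\le n$. Define $$H^n_{ij}=\binom{n+1}{i+j+1},\qquad \widetilde H^n_{ij}=\sum_{k=0}^{i+j+1}\binom{n-k+1}{n-i-j}\frac{s(n+1,k)}{n^{n-k+1}},$$ $$T^n_{ij}=\binom{n+1}{j-i},\qquad \widetilde T^n_{ij}=\sum_{k=0}^{j-i}\binom{n-k+1}{j-i-k}\frac{s(n+1,k)}{n^{n-k+1}},$$ $$D^n=\mathrm{diag}\big((-1)^{n-j}\,j!\,(n-j)!\big)_{j=0}^n,\qquad \Delta^n=\mathrm{diag}\Big(\binom{n}{j}\Big)_{j=0}^n,\qquad \widetilde V^n_{ij}=i^j(n-i)^{n-j}.$$ Then $$(V^n)^{-1}=(\Delta^n)^{-1}\big[\widetilde H^nT^n-H^n\widetilde T^n\big](\widetilde V^n)^T(D^n)^{-1}.$$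
   Context: $B^n_j(x)=\binom{n}{j}x^j(1-x)^{n-j}$. $s(n,k)$ denotes the signed Stirling numbers of the first kind, defined by $\prod_{i=0}^{n-1}(y-i)=\sum_{k=0}^{n}s(n,k)y^k$. Conventions: $\binom{a}{b}=0$ if $b<0$ or $b>a$; empty sums are $0$; $0^0=1$. *)

theory Defs
  imports "HOL-Computational_Algebra.Polynomial" "Jordan_Normal_Form.Matrix"
begin

text \<open>Signed Stirling numbers of the first kind:
  \<open>\<Prod>i<n. (y - i) = \<Sum>k. s n k * y^k\<close>.\<close>
definition stirling1s :: "nat \<Rightarrow> nat \<Rightarrow> real" where
  "stirling1s n k = coeff (\<Prod>i<n. [:- of_nat i, 1:]) k"

definition ibinom :: "int \<Rightarrow> int \<Rightarrow> real" where
  "ibinom a b = (if 0 \<le> b \<and> b \<le> a then real (nat a choose nat b) else 0)"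

definition bernstein :: "nat \<Rightarrow> nat \<Rightarrow> real \<Rightarrow> real" where
  "bernstein n j x = real (n choose j) * x ^ j * (1 - x) ^ (n - j)"

definition Vmat :: "nat \<Rightarrow> real mat" where
  "Vmat n = mat (n+1) (n+1) (\<lambda>(i,j). bernstein n j (real i / real n))"

definition Hmat :: "nat \<Rightarrow> real mat" where
  "Hmat n = mat (n+1) (n+1) (\<lambda>(i,j). ibinom (int n + 1) (int i + int j + 1))"

definition Htmat :: "nat \<Rightarrow> real mat" where
  "Htmat n = mat (n+1) (n+1) (\<lambda>(i,j).
     \<Sum>k\<in>{0..int i + int j + 1}. ibinom (int n - k + 1) (int n - int i - int j)
        * stirling1s (n+1) (nat k) / (real n powi (int n - k + 1)))"

definition Tmat :: "nat \<Rightarrow> real mat" where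
  "Tmat n = mat (n+1) (n+1) (\<lambda>(i,j). ibinom (int n + 1) (int j - int i))"

definition Ttmat :: "nat \<Rightarrow> real mat" where
  "Ttmat n = mat (n+1) (n+1) (\<lambda>(i,j).
     \<Sum>k\<in>{0..int j - int i}. ibinom (int n - k + 1) (int j - int i - k)
        * stirling1s (n+1) (nat k) / (real n powi (int n - k + 1)))"

definition Dmat :: "nat \<Rightarrow> real mat" where
  "Dmat n = mat_diag (n+1) (\<lambda>j. (-1) ^ (n - j) * fact j * fact (n - j))"

definition Dinv :: "nat \<Rightarrow> real mat" where
  "Dinv n = mat_diag (n+1) (\<lambda>j. 1 / ((-1) ^ (n - j) * fact j * fact (n - j)))"

definition Deltamat :: "nat \<Rightarrow> real mat" where
  "Deltamat n = mat_diag (n+1) (\<lambda>j. real (n choose j))"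

definition Deltainv :: "nat \<Rightarrow> real mat" where
  "Deltainv n = mat_diag (n+1) (\<lambda>j. 1 / real (n choose j))"

definition Vtmat :: "nat \<Rightarrow> real mat" where
  "Vtmat n = mat (n+1) (n+1) (\<lambda>(i,j). real i ^ j * real (n - i) ^ (n - j))"

end

theory Submission
  imports Defs "Jordan_Normal_Form.Determinant"
begin

(*
  Since V_aj = C(n,j) a^j (n-a)^(n-j) / n^n, the entry (a,g) of V W is, up to the factor
  1 / (n^n D_g), the double sum  S = sum_{j,k} X_jk x^j y^(n-j) u^k v^(n-k)  taken at
  x = a, y = n - a, u = g, v = n - g, where X = Ht T - H Tt.  This X is the Bezout matrix
  of two binary forms of degree n + 1: A(x,y) = prod_{i<=n} (x - i (x+y)/n), whose
  coefficients (built from the Stirling numbers) fill Ht and Tt, and B(x,y) = (x+y)^(n+1),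
  whose coefficients fill H and T.  The Bezoutian identity
      (x v - y u) S = A(x,y) B(u,v) - A(u,v) B(x,y)
  on the line x + y = u + v = n, where A(z, n - z) = prod_{i<=n} (z - i) vanishes at the
  node z = g, gives S = n^n prod_{i/=g} (a - i): a Lagrange basis polynomial, normalised
  exactly by D_g = (-1)^(n-g) g! (n-g)!.
*)

section \<open>Homogeneous Bezoutians\<close>

definition homog :: "nat \<Rightarrow> (nat \<Rightarrow> 'a::comm_semiring_1) \<Rightarrow> 'a \<Rightarrow> 'a \<Rightarrow> 'a" where
  "homog N a x y = (\<Sum>m\<le>N. a m * x ^ m * y ^ (N - m))"

definition bezoutian :: "nat \<Rightarrow> (nat \<Rightarrow> 'a::comm_ring_1) \<Rightarrow> (nat \<Rightarrow> 'a) \<Rightarrow> nat \<Rightarrow> nat \<Rightarrow> 'a" where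
  "bezoutian n a b j k =
     (\<Sum>m\<le>n. a (j + m + 1) * (if m \<le> k then b (k - m) else 0)
            - b (j + m + 1) * (if m \<le> k then a (k - m) else 0))"

definition unit_seq :: "nat \<Rightarrow> nat \<Rightarrow> 'a::zero_neq_one" where
  "unit_seq d m = of_bool (m = d)"

lemma homog_unit_seq: "d \<le> N \<Longrightarrow> homog N (unit_seq d) x y = x ^ d * y ^ (N - d)"
  unfolding homog_def unit_seq_def by (simp add: mult.assoc)

lemma homog_eq_sum_unit_seq: "homog N a x y = (\<Sum>d\<le>N. a d * homog N (unit_seq d) x y)"
  by (simp add: homog_unit_seq) (simp add: homog_def mult.assoc)

lemma seq_eq_sum_unit_seq:
  fixes a :: "nat \<Rightarrow> 'a::comm_semiring_1"
  assumes "\<forall>m>N. a m = 0"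
  shows "a = (\<lambda>m. \<Sum>d\<le>N. a d * unit_seq d m)"
proof
  fix m
  have "(\<Sum>d\<le>N. a d * unit_seq d m) = (\<Sum>d\<le>N. if d = m then a d else 0)"
    unfolding unit_seq_def by (intro sum.cong) auto
  then show "a m = (\<Sum>d\<le>N. a d * unit_seq d m)"
    using assms by (simp add: not_le)
qed

lemma bezoutian_swap: "bezoutian n b a j k = - bezoutian n a b j k"
  unfolding bezoutian_def by (simp add: sum_negf[symmetric])

lemma bezoutian_sum_left:
  assumes "finite D"
  shows "bezoutian n (\<lambda>m. \<Sum>d\<in>D. c d * f d m) b j k = (\<Sum>d\<in>D. c d * bezoutian n (f d) b j k)"
proof -
  have "bezoutian n (\<lambda>m. \<Sum>d\<in>D. c d * f d m) b j k
      = (\<Sum>m\<le>n. \<Sum>d\<in>D. c d * (f d (j + m + 1) * (if m \<le> k then b (k - m) else 0)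
                               - b (j + m + 1) * (if m \<le> k then f d (k - m) else 0)))"
    unfolding bezoutian_def
    by (intro sum.cong refl) (simp add: sum_distrib_left sum_distrib_right sum_subtractf right_diff_distrib mult_ac)
  also have "\<dots> = (\<Sum>d\<in>D. c d * bezoutian n (f d) b j k)"
    unfolding bezoutian_def sum_distrib_left by (rule sum.swap)
  finally show ?thesis .
qed

lemma bezoutian_sum_right:
  assumes "finite D"
  shows "bezoutian n a (\<lambda>m. \<Sum>d\<in>D. c d * f d m) j k = (\<Sum>d\<in>D. c d * bezoutian n a (f d) j k)"
proof -
  have "bezoutian n a (\<lambda>m. \<Sum>d\<in>D. c d * f d m) j k = - (\<Sum>d\<in>D. c d * bezoutian n (f d) a j k)"
    by (subst bezoutian_swap) (simp only: bezoutian_sum_left[OF assms])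
  also have "\<dots> = (\<Sum>d\<in>D. c d * bezoutian n a (f d) j k)"
    unfolding sum_negf[symmetric] by (intro sum.cong refl) (subst bezoutian_swap, simp)
  finally show ?thesis .
qed

lemma bezoutian_eq_sum_unit_seq:
  assumes "\<forall>m>Suc n. a m = 0" "\<forall>m>Suc n. b m = 0"
  shows "bezoutian n a b j k
       = (\<Sum>d\<le>Suc n. \<Sum>e\<le>Suc n. a d * b e * bezoutian n (unit_seq d) (unit_seq e) j k)"
proof -
  have "bezoutian n a b j k = bezoutian n (\<lambda>m. \<Sum>d\<le>Suc n. a d * unit_seq d m)
                                          (\<lambda>m. \<Sum>e\<le>Suc n. b e * unit_seq e m) j k"
    using seq_eq_sum_unit_seq[OF assms(1)] seq_eq_sum_unit_seq[OF assms(2)]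
    by (rule arg_cong2[where f = "\<lambda>a b. bezoutian n a b j k"])
  also have "\<dots> = (\<Sum>d\<le>Suc n. a d * (\<Sum>e\<le>Suc n. b e * bezoutian n (unit_seq d) (unit_seq e) j k))"
    by (simp only: bezoutian_sum_left bezoutian_sum_right finite_atMost)
  finally show ?thesis
    by (simp only: sum_distrib_left mult.assoc)
qed

lemma sum_unit_seq_convolution:
  assumes "d \<le> Suc n"
  shows "(\<Sum>m\<le>n. unit_seq d (j + m + 1) * (if m \<le> k then unit_seq e (k - m) else 0))
       = (of_bool (j < d \<and> j + k + 1 = d + e) :: 'a::comm_semiring_1)"
proof -
  have "unit_seq d (j + m + 1) * (if m \<le> k then unit_seq e (k - m) else 0)
      = (if m = d - Suc j then of_bool (j < d \<and> j + k + 1 = d + e) else (0::'a))" for m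
    unfolding unit_seq_def by (cases "j + m + 1 = d"; cases "m \<le> k") auto
  then show ?thesis
    using assms by auto
qed

lemma bezoutian_unit_seq:
  assumes "e \<le> d" "d \<le> Suc n"
  shows "bezoutian n (unit_seq d) (unit_seq e) j k
       = (of_bool (e \<le> j \<and> j < d \<and> j + k + 1 = d + e) :: 'a::comm_ring_1)"
proof -
  have "bezoutian n (unit_seq d) (unit_seq e) j k
      = of_bool (j < d \<and> j + k + 1 = d + e) - (of_bool (j < e \<and> j + k + 1 = e + d) :: 'a)"
    unfolding bezoutian_def sum_subtractf
    using assms by (simp only: sum_unit_seq_convolution)
  then show ?thesis
    using assms(1) by (cases "j < e") (auto simp: add.commute)
qed

lemma sum_bezoutian_unit_seq:
  assumes "e \<le> d" "d \<le> Suc n"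
  shows "(\<Sum>j\<le>n. \<Sum>k\<le>n. bezoutian n (unit_seq d) (unit_seq e) j k * w j k)
       = (\<Sum>j=e..<d. w j (d + e - Suc j))"
proof -
  have "(\<Sum>k\<le>n. bezoutian n (unit_seq d) (unit_seq e) j k * w j k)
      = (if j \<in> {e..<d} then w j (d + e - Suc j) else 0)" for j
  proof -
    have "(\<Sum>k\<le>n. bezoutian n (unit_seq d) (unit_seq e) j k * w j k)
        = (\<Sum>k\<le>n. if k = d + e - Suc j then if j \<in> {e..<d} then w j k else 0 else 0)"
      using assms by (intro sum.cong) (auto simp: bezoutian_unit_seq)
    then show ?thesis
      using assms by auto
  qed
  then have "(\<Sum>j\<le>n. \<Sum>k\<le>n. bezoutian n (unit_seq d) (unit_seq e) j k * w j k)
      = (\<Sum>j\<in>{..n} \<inter> {e..<d}. w j (d + e - Suc j))"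
    by (simp add: sum.inter_restrict)
  also have "{..n} \<inter> {e..<d} = {e..<d}"
    using assms by auto
  finally show ?thesis .
qed

lemma telescope_homog_monomials:
  fixes x y u v :: "'a::comm_ring_1"
  assumes "e \<le> d" "d \<le> Suc n"
  shows "(x * v - y * u) * (\<Sum>j=e..<d. x ^ j * y ^ (n - j) * u ^ (d + e - Suc j) * v ^ (n - (d + e - Suc j)))
       = x ^ d * y ^ (Suc n - d) * u ^ e * v ^ (Suc n - e) - x ^ e * y ^ (Suc n - e) * u ^ d * v ^ (Suc n - d)"
proof -
  define g where "g j = x ^ j * y ^ (Suc n - j) * u ^ (d + e - j) * v ^ (Suc n + j - d - e)" for j
  have step: "(x * v - y * u) * (x ^ j * y ^ (n - j) * u ^ (d + e - Suc j) * v ^ (n - (d + e - Suc j)))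
      = g (Suc j) - g j" if "j \<in> {e..<d}" for j
  proof -
    have "Suc n - j = Suc (n - j)" "d + e - j = Suc (d + e - Suc j)"
      "Suc n + Suc j - d - e = Suc (n - (d + e - Suc j))" "Suc n + j - d - e = n - (d + e - Suc j)"
      "Suc n - Suc j = n - j"
      using that assms by auto
    then show ?thesis
      unfolding g_def by (simp add: algebra_simps)
  qed
  have "(x * v - y * u) * (\<Sum>j=e..<d. x ^ j * y ^ (n - j) * u ^ (d + e - Suc j) * v ^ (n - (d + e - Suc j)))
      = (\<Sum>j=e..<d. g (Suc j) - g j)"
    unfolding sum_distrib_left using step by (rule sum.cong[OF refl])
  also have "\<dots> = g d - g e"
    by (rule sum_Suc_diff'[OF assms(1)])
  also have "\<dots> = x ^ d * y ^ (Suc n - d) * u ^ e * v ^ (Suc n - e) - x ^ e * y ^ (Suc n - e) * u ^ d * v ^ (Suc n - d)"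
    using assms unfolding g_def by (simp add: add.commute)
  finally show ?thesis .
qed

(* Both sides of the Bezoutian identity are bilinear in the two coefficient sequences, so it
   suffices to check it on unit sequences, where the left-hand side telescopes. *)
lemma bezoutian_identity_unit_seq_le:
  fixes x y u v :: "'a::comm_ring_1"
  assumes "e \<le> d" "d \<le> Suc n"
  shows "(x * v - y * u) * (\<Sum>j\<le>n. \<Sum>k\<le>n. bezoutian n (unit_seq d) (unit_seq e) j k * (x ^ j * y ^ (n - j) * u ^ k * v ^ (n - k)))
       = homog (Suc n) (unit_seq d) x y * homog (Suc n) (unit_seq e) u v
         - homog (Suc n) (unit_seq d) u v * homog (Suc n) (unit_seq e) x y"
proof -
  have "e \<le> Suc n"
    using assms by simp
  with assms show ?thesis
    by (simp only: sum_bezoutian_unit_seq[OF assms, where w = "\<lambda>j k. x ^ j * y ^ (n - j) * u ^ k * v ^ (n - k)"]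
        telescope_homog_monomials homog_unit_seq) (simp add: mult_ac)
qed

lemma bezoutian_identity_unit_seq:
  fixes x y u v :: "'a::comm_ring_1"
  assumes "d \<le> Suc n" "e \<le> Suc n"
  shows "(x * v - y * u) * (\<Sum>j\<le>n. \<Sum>k\<le>n. bezoutian n (unit_seq d) (unit_seq e) j k * (x ^ j * y ^ (n - j) * u ^ k * v ^ (n - k)))
       = homog (Suc n) (unit_seq d) x y * homog (Suc n) (unit_seq e) u v
         - homog (Suc n) (unit_seq d) u v * homog (Suc n) (unit_seq e) x y"
proof (cases "e \<le> d")
  case True
  then show ?thesis
    using assms(1) by (rule bezoutian_identity_unit_seq_le)
next
  case False
  then have "e \<ge> d" by simp
  from bezoutian_identity_unit_seq_le[OF this assms(2), of x v y u] show ?thesis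
    by (simp add: bezoutian_swap[of n "unit_seq d" "unit_seq e"] sum_negf)
qed

lemma sum_swap_nested:
  "(\<Sum>i\<in>A. \<Sum>j\<in>B. \<Sum>k\<in>C. \<Sum>l\<in>D. f i j k l) = (\<Sum>k\<in>C. \<Sum>l\<in>D. \<Sum>i\<in>A. \<Sum>j\<in>B. f i j k l)"
  by (simp only: sum.swap[where B = D], simp only: sum.swap[where B = C])

lemma bezoutian_identity:
  fixes x y u v :: "'a::comm_ring_1"
  assumes "\<forall>m>Suc n. a m = 0" "\<forall>m>Suc n. b m = 0"
  shows "(x * v - y * u) * (\<Sum>j\<le>n. \<Sum>k\<le>n. bezoutian n a b j k * (x ^ j * y ^ (n - j) * u ^ k * v ^ (n - k)))
       = homog (Suc n) a x y * homog (Suc n) b u v - homog (Suc n) a u v * homog (Suc n) b x y"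
proof -
  define w where "w j k = x ^ j * y ^ (n - j) * u ^ k * v ^ (n - k)" for j k
  define S where "S d e = (\<Sum>j\<le>n. \<Sum>k\<le>n. bezoutian n (unit_seq d) (unit_seq e) j k * w j k)" for d e
  define H where "H d p q = homog (Suc n) (unit_seq d) p q" for d and p q :: 'a
  have "(\<Sum>j\<le>n. \<Sum>k\<le>n. bezoutian n a b j k * w j k)
      = (\<Sum>j\<le>n. \<Sum>k\<le>n. \<Sum>d\<le>Suc n. \<Sum>e\<le>Suc n. a d * (b e * (bezoutian n (unit_seq d) (unit_seq e) j k * w j k)))"
    by (simp only: bezoutian_eq_sum_unit_seq[OF assms] sum_distrib_right mult.assoc)
  also have "\<dots> = (\<Sum>d\<le>Suc n. \<Sum>e\<le>Suc n. a d * b e * S d e)"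
    unfolding sum_swap_nested[where A = "{..n}" and C = "{..Suc n}"] S_def by (simp only: sum_distrib_left mult.assoc)
  finally have "(x * v - y * u) * (\<Sum>j\<le>n. \<Sum>k\<le>n. bezoutian n a b j k * w j k)
      = (\<Sum>d\<le>Suc n. \<Sum>e\<le>Suc n. a d * b e * ((x * v - y * u) * S d e))"
    by (simp only: sum_distrib_left mult_ac)
  also have "\<dots> = (\<Sum>d\<le>Suc n. \<Sum>e\<le>Suc n. a d * b e * (H d x y * H e u v - H d u v * H e x y))"
    unfolding S_def w_def H_def by (intro sum.cong refl) (simp add: bezoutian_identity_unit_seq)
  also have "\<dots> = (\<Sum>d\<le>Suc n. a d * H d x y) * (\<Sum>e\<le>Suc n. b e * H e u v)
                   - (\<Sum>d\<le>Suc n. a d * H d u v) * (\<Sum>e\<le>Suc n. b e * H e x y)"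
    by (simp only: sum_product right_diff_distrib sum_subtractf mult_ac)
  finally show ?thesis
    unfolding w_def H_def homog_eq_sum_unit_seq[of "Suc n" a] homog_eq_sum_unit_seq[of "Suc n" b] .
qed

section \<open>Stirling coefficients and the matrices of the formula\<close>

lemma degree_falling_poly: "degree (\<Prod>i<N. [:- of_nat i, 1::real:]) = N"
  by (subst degree_prod_eq_sum_degree) auto

lemma stirling1s_eq_0: "N < k \<Longrightarrow> stirling1s N k = 0"
  unfolding stirling1s_def by (rule coeff_eq_0) (simp add: degree_falling_poly)

lemma sum_stirling1s_power: "(\<Sum>k\<le>N. stirling1s N k * z ^ k) = (\<Prod>i<N. z - real i)"
proof -
  have "(\<Prod>i<N. z - real i) = poly (\<Prod>i<N. [:- of_nat i, 1::real:]) z"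
    by (simp add: poly_prod)
  also have "\<dots> = (\<Sum>k\<le>N. stirling1s N k * z ^ k)"
    unfolding poly_altdef degree_falling_poly stirling1s_def ..
  finally show ?thesis ..
qed

lemma homog_binomial_convolution:
  fixes c :: "nat \<Rightarrow> 'a::comm_semiring_1"
  shows "homog N (\<lambda>m. \<Sum>k\<le>m. of_nat (N - k choose (m - k)) * c k) z w
       = (\<Sum>k\<le>N. c k * z ^ k * (z + w) ^ (N - k))"
proof -
  let ?t = "\<lambda>k m. of_nat (N - k choose (m - k)) * c k * z ^ m * w ^ (N - m)"
  have inner: "(\<Sum>m\<le>N. if k \<le> m then ?t k m else 0) = c k * z ^ k * (z + w) ^ (N - k)"
    if "k \<le> N" for k
  proof -
    have "(\<Sum>m\<le>N. if k \<le> m then ?t k m else 0) = (\<Sum>m\<in>{m\<in>{..N}. k \<le> m}. ?t k m)"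
      by (simp only: sum.inter_filter[OF finite_atMost])
    also have "{m\<in>{..N}. k \<le> m} = {0 + k..(N - k) + k}"
      using that by auto
    also have "(\<Sum>m\<in>{0 + k..(N - k) + k}. ?t k m) = (\<Sum>i=0..N - k. ?t k (i + k))"
      by (rule sum.shift_bounds_cl_nat_ivl)
    also have "\<dots> = c k * z ^ k * (\<Sum>i\<le>N - k. of_nat (N - k choose i) * z ^ i * w ^ (N - k - i))"
      by (simp add: sum_distrib_left atLeast0AtMost power_add mult_ac add.commute)
    also have "\<dots> = c k * z ^ k * (z + w) ^ (N - k)"
      by (simp add: binomial_ring)
    finally show ?thesis .
  qed
  have outer: "(\<Sum>k\<le>m. of_nat (N - k choose (m - k)) * c k) * z ^ m * w ^ (N - m)
      = (\<Sum>k\<le>N. if k \<le> m then ?t k m else 0)" if "m \<le> N" for m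
  proof -
    have "{..m} = {k\<in>{..N}. k \<le> m}"
      using that by auto
    then show ?thesis
      by (simp only: sum_distrib_right sum.inter_filter[OF finite_atMost]) (intro sum.cong refl, simp)
  qed
  have "homog N (\<lambda>m. \<Sum>k\<le>m. of_nat (N - k choose (m - k)) * c k) z w
      = (\<Sum>m\<le>N. \<Sum>k\<le>N. if k \<le> m then ?t k m else 0)"
    unfolding homog_def by (intro sum.cong refl) (simp add: outer)
  also have "\<dots> = (\<Sum>k\<le>N. c k * z ^ k * (z + w) ^ (N - k))"
    by (subst sum.swap) (simp add: inner)
  finally show ?thesis .
qed

(* The coefficient of x^m y^(n+1-m) in prod_{i<=n} (x - i (x + y) / n). *)
definition falling_hcoeff :: "nat \<Rightarrow> nat \<Rightarrow> real" where
  "falling_hcoeff n m =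
     (\<Sum>k\<le>m. real (Suc n - k choose (m - k)) * (stirling1s (Suc n) k / real n ^ (Suc n - k)))"

lemma falling_hcoeff_eq_0:
  assumes "Suc n < m"
  shows "falling_hcoeff n m = 0"
  unfolding falling_hcoeff_def
proof (intro sum.neutral ballI)
  fix k
  show "real (Suc n - k choose (m - k)) * (stirling1s (Suc n) k / real n ^ (Suc n - k)) = 0"
  proof (cases "k \<le> Suc n")
    case True
    then have "Suc n - k < m - k"
      using assms by simp
    then show ?thesis
      by (simp add: binomial_eq_0)
  qed (simp add: stirling1s_eq_0)
qed

lemma homog_falling_hcoeff:
  assumes "n \<ge> 1"
  shows "homog (Suc n) (falling_hcoeff n) z (real n - z) = (\<Prod>i<Suc n. z - real i)"
proof -
  have "falling_hcoeff n = (\<lambda>m. \<Sum>k\<le>m. of_nat (Suc n - k choose (m - k))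
                                       * (stirling1s (Suc n) k / real n ^ (Suc n - k)))"
    unfolding falling_hcoeff_def by (rule ext) (rule refl)
  then have "homog (Suc n) (falling_hcoeff n) z (real n - z)
      = (\<Sum>k\<le>Suc n. stirling1s (Suc n) k / real n ^ (Suc n - k) * z ^ k * (z + (real n - z)) ^ (Suc n - k))"
    by (simp only: homog_binomial_convolution)
  also have "\<dots> = (\<Sum>k\<le>Suc n. stirling1s (Suc n) k * z ^ k)"
    using assms by (intro sum.cong refl) simp
  finally show ?thesis
    by (simp only: sum_stirling1s_power)
qed

lemma ibinom_of_nat: "ibinom (int a) (int b) = real (a choose b)"
  unfolding ibinom_def by (simp add: binomial_eq_0)

lemma ibinom_symmetric: "ibinom a b = ibinom a (a - b)"
proof (cases "0 \<le> b \<and> b \<le> a")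
  case True
  then have "nat (a - b) = nat a - nat b" "nat b \<le> nat a"
    by auto
  then show ?thesis
    using True unfolding ibinom_def by (simp add: binomial_symmetric[of "nat b" "nat a"])
qed (auto simp: ibinom_def)

lemma sum_int_atLeastAtMost: "(\<Sum>k\<in>{0..int m}. f k) = (\<Sum>k\<le>m. f (int k))"
proof -
  have "{0..int m} = int ` {..m}"
    by (simp add: image_int_atLeastAtMost atMost_atLeast0)
  then show ?thesis
    by (simp add: sum.reindex)
qed

lemma falling_hcoeff_int_sum:
  "falling_hcoeff n m = (\<Sum>k\<in>{0..int m}. ibinom (int n - k + 1) (int m - k)
                            * stirling1s (n + 1) (nat k) / (real n powi (int n - k + 1)))"
  unfolding sum_int_atLeastAtMost falling_hcoeff_def
proof (intro sum.cong refl)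
  fix k assume "k \<in> {..m}"
  show "real (Suc n - k choose (m - k)) * (stirling1s (Suc n) k / real n ^ (Suc n - k))
      = ibinom (int n - int k + 1) (int m - int k) * stirling1s (n + 1) (nat (int k))
        / real n powi (int n - int k + 1)"
  proof (cases "k \<le> Suc n")
    case True
    then have int_eqs: "int n - int k + 1 = int (Suc n - k)" "int m - int k = int (m - k)"
      using \<open>k \<in> {..m}\<close> by auto
    have "ibinom (int n - int k + 1) (int m - int k) = real (Suc n - k choose (m - k))"
      by (simp only: int_eqs ibinom_of_nat)
    moreover have "real n powi (int n - int k + 1) = real n ^ (Suc n - k)"
      by (simp only: int_eqs power_int_of_nat)
    ultimately show ?thesis
      by simp
  qed (simp add: stirling1s_eq_0)
qed

definition bezout_mat :: "nat \<Rightarrow> real mat" where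
  "bezout_mat n = Htmat n * Tmat n - Hmat n * Ttmat n"

definition Vinv :: "nat \<Rightarrow> real mat" where
  "Vinv n = Deltainv n * bezout_mat n * transpose_mat (Vtmat n) * Dinv n"

lemma dim_mats [simp]:
  "dim_row (Htmat n) = Suc n" "dim_col (Htmat n) = Suc n"
  "dim_row (Hmat n) = Suc n" "dim_col (Hmat n) = Suc n"
  "dim_row (Tmat n) = Suc n" "dim_col (Tmat n) = Suc n"
  "dim_row (Ttmat n) = Suc n" "dim_col (Ttmat n) = Suc n"
  "dim_row (Vmat n) = Suc n" "dim_col (Vmat n) = Suc n"
  "dim_row (Vtmat n) = Suc n" "dim_col (Vtmat n) = Suc n"
  "dim_row (Dinv n) = Suc n" "dim_col (Dinv n) = Suc n"
  "dim_row (Deltainv n) = Suc n" "dim_col (Deltainv n) = Suc n"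
  by (simp_all add: Htmat_def Hmat_def Tmat_def Ttmat_def Vmat_def Vtmat_def Dinv_def Deltainv_def mat_diag_def)

lemma Htmat_entry:
  assumes "i \<le> n" "j \<le> n"
  shows "Htmat n $$ (i, j) = falling_hcoeff n (i + j + 1)"
proof -
  have "Htmat n $$ (i, j) = (\<Sum>k\<in>{0..int i + int j + 1}. ibinom (int n - k + 1) (int n - int i - int j)
                            * stirling1s (n + 1) (nat k) / (real n powi (int n - k + 1)))"
    using assms by (simp add: Htmat_def)
  also have "\<dots> = (\<Sum>k\<in>{0..int i + int j + 1}. ibinom (int n - k + 1) (int i + int j + 1 - k)
                            * stirling1s (n + 1) (nat k) / (real n powi (int n - k + 1)))"
    by (intro sum.cong refl) (subst ibinom_symmetric, simp add: algebra_simps)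
  also have "\<dots> = falling_hcoeff n (i + j + 1)"
  proof -
    have "int (i + j + 1) = int i + int j + 1"
      by simp
    then show ?thesis
      by (simp only: falling_hcoeff_int_sum[of n "i + j + 1"])
  qed
  finally show ?thesis .
qed

lemma Ttmat_entry:
  assumes "i \<le> n" "j \<le> n"
  shows "Ttmat n $$ (i, j) = (if i \<le> j then falling_hcoeff n (j - i) else 0)"
proof (cases "i \<le> j")
  case True
  then have "int j - int i = int (j - i)"
    by simp
  then show ?thesis
    using assms True by (simp add: Ttmat_def falling_hcoeff_int_sum)
qed (use assms in \<open>simp add: Ttmat_def\<close>)

lemma Hmat_entry:
  assumes "i \<le> n" "j \<le> n"
  shows "Hmat n $$ (i, j) = real (Suc n choose (i + j + 1))"
proof -
  have "Hmat n $$ (i, j) = ibinom (int (Suc n)) (int (i + j + 1))"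
    using assms by (simp add: Hmat_def add_ac)
  then show ?thesis
    by (simp only: ibinom_of_nat)
qed

lemma Tmat_entry:
  assumes "i \<le> n" "j \<le> n"
  shows "Tmat n $$ (i, j) = (if i \<le> j then real (Suc n choose (j - i)) else 0)"
proof (cases "i \<le> j")
  case True
  then have "Tmat n $$ (i, j) = ibinom (int (Suc n)) (int (j - i))"
    using assms by (simp add: Tmat_def of_nat_diff add_ac)
  then show ?thesis
    using True by (simp only: ibinom_of_nat if_True)
qed (use assms in \<open>simp add: Tmat_def ibinom_def\<close>)

lemma bezout_mat_entry:
  assumes "i \<le> n" "j \<le> n"
  shows "bezout_mat n $$ (i, j) = bezoutian n (falling_hcoeff n) (\<lambda>m. real (Suc n choose m)) i j"
proof -
  have "bezout_mat n $$ (i, j)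
      = (\<Sum>m\<le>n. Htmat n $$ (i, m) * Tmat n $$ (m, j)) - (\<Sum>m\<le>n. Hmat n $$ (i, m) * Ttmat n $$ (m, j))"
    using assms by (simp add: bezout_mat_def scalar_prod_def atLeast0LessThan lessThan_Suc_atMost)
  also have "\<dots> = bezoutian n (falling_hcoeff n) (\<lambda>m. real (Suc n choose m)) i j"
    unfolding bezoutian_def sum_subtractf using assms
    by (intro arg_cong2[where f = minus] sum.cong refl)
      (simp_all add: Htmat_entry Tmat_entry Hmat_entry Ttmat_entry)
  finally show ?thesis .
qed

section \<open>The inverse of the Bernstein collocation matrix\<close>

lemma isCont_eq_if_eq_off:
  fixes f g :: "real \<Rightarrow> real"
  assumes "isCont f a" "isCont g a" "\<And>z. z \<noteq> a \<Longrightarrow> f z = g z"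
  shows "f a = g a"
proof -
  have "eventually (\<lambda>z. f z = g z) (at a)"
    using assms(3) by (auto simp: eventually_at_filter)
  then have "eventually (\<lambda>z. f z = g z) (nhds a)"
    by (rule at_within_isCont_imp_nhds[OF _ assms(1,2)])
  then show ?thesis
    by (rule eventually_nhds_x_imp_x)
qed

lemma sum_bezout_mat_monomials:
  assumes n: "n \<ge> 1" and g: "g \<le> n"
  shows "(\<Sum>j\<le>n. \<Sum>k\<le>n. bezout_mat n $$ (j, k)
            * (z ^ j * (real n - z) ^ (n - j) * real g ^ k * (real n - real g) ^ (n - k)))
       = real n ^ n * (\<Prod>i\<in>{..<Suc n} - {g}. z - real i)"
proof -
  define S where "S z = (\<Sum>j\<le>n. \<Sum>k\<le>n. bezoutian n (falling_hcoeff n) (\<lambda>m. real (Suc n choose m)) j k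
            * (z ^ j * (real n - z) ^ (n - j) * real g ^ k * (real n - real g) ^ (n - k)))" for z
  define P where "P z = real n ^ n * (\<Prod>i\<in>{..<Suc n} - {g}. z - real i)" for z
  have homog_binomial: "homog (Suc n) (\<lambda>m. real (Suc n choose m)) x (real n - x) = real n ^ Suc n" for x
    unfolding homog_def using binomial_ring[of x "real n - x" "Suc n"] by simp
  have prod_split: "(\<Prod>i<Suc n. x - real i) = (x - real g) * (\<Prod>i\<in>{..<Suc n} - {g}. x - real i)" for x
    using g by (subst prod.remove[of _ g]) auto
  have scaled: "real n * (z - real g) * S z = real n * (z - real g) * P z" for z
  proof -
    have "real n * (z - real g) * S z
        = homog (Suc n) (falling_hcoeff n) z (real n - z) * homog (Suc n) (\<lambda>m. real (Suc n choose m)) (real g) (real n - real g)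
          - homog (Suc n) (falling_hcoeff n) (real g) (real n - real g) * homog (Suc n) (\<lambda>m. real (Suc n choose m)) z (real n - z)"
      using bezoutian_identity[of n "falling_hcoeff n" "\<lambda>m. real (Suc n choose m)" z "real n - real g" "real n - z" "real g"]
      unfolding S_def by (simp add: falling_hcoeff_eq_0 algebra_simps)
    also have "\<dots> = real n * (z - real g) * P z"
      unfolding homog_falling_hcoeff[OF n] homog_binomial prod_split P_def by simp
    finally show ?thesis .
  qed
  have off: "S z = P z" if "z \<noteq> real g" for z
  proof -
    have "real n * (z - real g) \<noteq> 0"
      using n that by simp
    with scaled[of z] show ?thesis
      by simp
  qed
  \<comment> \<open>At the node itself the factor \<open>z - g\<close> cannot be cancelled; both sides are continuous.\<close>
  have "S z = P z"
  proof (cases "z = real g")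
    case True
    have "S (real g) = P (real g)"
    proof (rule isCont_eq_if_eq_off[where f = S and g = P])
      show "isCont S (real g)"
        unfolding S_def by (intro continuous_intros)
      show "isCont P (real g)"
        unfolding P_def by (intro continuous_intros)
    qed (rule off)
    with True show ?thesis
      by simp
  qed (rule off)
  then show ?thesis
    unfolding S_def P_def using g by (simp add: bezout_mat_entry)
qed

lemma Vmat_entry:
  assumes "n \<ge> 1" "a \<le> n" "j \<le> n"
  shows "Vmat n $$ (a, j) = real (n choose j) * (real a ^ j * (real n - real a) ^ (n - j)) / real n ^ n"
proof -
  have "1 - real a / real n = (real n - real a) / real n"
    using assms by (simp add: field_simps)
  moreover have "real n ^ n = real n ^ j * real n ^ (n - j)"
    using assms by (simp add: power_add[symmetric])
  ultimately show ?thesis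
    using assms by (simp add: Vmat_def bernstein_def power_divide mult_ac)
qed

lemma Vinv_entry:
  assumes "j \<le> n" "g \<le> n"
  shows "Vinv n $$ (j, g)
       = (\<Sum>k\<le>n. bezout_mat n $$ (j, k) * (real g ^ k * (real n - real g) ^ (n - k)))
         / (real (n choose j) * ((-1) ^ (n - g) * fact g * fact (n - g)))"
proof -
  let ?A = "Deltainv n * bezout_mat n"
  have carrier_bezout: "bezout_mat n \<in> carrier_mat (n + 1) (n + 1)"
    unfolding bezout_mat_def carrier_mat_def by simp
  have A: "?A = mat (n + 1) (n + 1) (\<lambda>(i, k). 1 / real (n choose i) * bezout_mat n $$ (i, k))"
    unfolding Deltainv_def mat_diag_mult_left[OF carrier_bezout] ..
  have carrier_AV: "?A * transpose_mat (Vtmat n) \<in> carrier_mat (n + 1) (n + 1)"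
    unfolding A by auto
  have "Vinv n $$ (j, g)
      = (?A * transpose_mat (Vtmat n)) $$ (j, g) * (1 / ((-1) ^ (n - g) * fact g * fact (n - g)))"
    unfolding Vinv_def Dinv_def mat_diag_mult_right[OF carrier_AV] using assms by simp
  also have "(?A * transpose_mat (Vtmat n)) $$ (j, g)
      = (\<Sum>k\<in>{0..<Suc n}. 1 / real (n choose j) * bezout_mat n $$ (j, k) * (real g ^ k * real (n - g) ^ (n - k)))"
    unfolding A using assms by (simp add: scalar_prod_def Vtmat_def)
  also have "\<dots> = 1 / real (n choose j) * (\<Sum>k\<le>n. bezout_mat n $$ (j, k) * (real g ^ k * (real n - real g) ^ (n - k)))"
    unfolding atLeast0LessThan lessThan_Suc_atMost sum_distrib_left
    using assms by (intro sum.cong refl) (simp add: of_nat_diff)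
  moreover have "1 / c * s * (1 / d) = s / (c * d)" for c s d :: real
    by simp
  ultimately show ?thesis
    by (simp only:)
qed

lemma prod_diff_nodes:
  assumes "g \<le> n"
  shows "(\<Prod>i\<in>{..<Suc n} - {g}. real g - real i) = (-1) ^ (n - g) * fact g * fact (n - g)"
  using assms
proof (induction n rule: nat_induct_at_least)
  case base
  have "{..<Suc g} - {g} = {0..<g}"
    by auto
  moreover have "(\<Prod>i\<in>{0..<g}. real g - real i) = fact g"
    unfolding fact_prod_rev of_nat_prod by (intro prod.cong refl) (auto simp: of_nat_diff)
  ultimately show ?case
    by simp
next
  case (Suc n)
  have "{..<Suc (Suc n)} - {g} = insert (Suc n) ({..<Suc n} - {g})"
    using Suc by auto
  then have "(\<Prod>i\<in>{..<Suc (Suc n)} - {g}. real g - real i)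
      = (real g - real (Suc n)) * ((-1) ^ (n - g) * fact g * fact (n - g))"
    using Suc by simp
  moreover have "Suc n - g = Suc (n - g)" "real g - real (Suc n) = - real (Suc (n - g))"
    using Suc by (auto simp: of_nat_diff)
  ultimately show ?case
    by (simp add: algebra_simps)
qed

lemma Vinv_carrier: "Vinv n \<in> carrier_mat (Suc n) (Suc n)"
  unfolding Vinv_def carrier_mat_def by simp

lemma Vmat_mult_Vinv:
  assumes n: "n \<ge> 1"
  shows "Vmat n * Vinv n = 1\<^sub>m (Suc n)"
proof (rule eq_matI)
  note dims = carrier_matD[OF Vinv_carrier[of n]]
  show "dim_row (Vmat n * Vinv n) = dim_row (1\<^sub>m (Suc n))"
    "dim_col (Vmat n * Vinv n) = dim_col (1\<^sub>m (Suc n))"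
    using dims by simp_all
  fix a g
  assume "a < dim_row (1\<^sub>m (Suc n))" "g < dim_col (1\<^sub>m (Suc n))"
  then have a: "a \<le> n" and g: "g \<le> n"
    by auto
  define d :: real where "d = (-1) ^ (n - g) * fact g * fact (n - g)"
  have "(Vmat n * Vinv n) $$ (a, g) = (\<Sum>j\<le>n. Vmat n $$ (a, j) * Vinv n $$ (j, g))"
    using a g dims by (simp add: scalar_prod_def atLeast0LessThan lessThan_Suc_atMost)
  also have "\<dots> = (\<Sum>j\<le>n. (\<Sum>k\<le>n. bezout_mat n $$ (j, k)
                 * (real a ^ j * (real n - real a) ^ (n - j) * real g ^ k * (real n - real g) ^ (n - k)))
               / (real n ^ n * d))"
  proof (intro sum.cong refl)
    fix j assume "j \<in> {..n}"
    then have j: "j \<le> n" and "real (n choose j) \<noteq> 0"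
      by simp_all
    have cancel: "c * x / m * (s / (c * e)) = x * s / (m * e)" if "c \<noteq> 0" for c x m s e :: real
      using that by simp
    show "Vmat n $$ (a, j) * Vinv n $$ (j, g) = (\<Sum>k\<le>n. bezout_mat n $$ (j, k)
                 * (real a ^ j * (real n - real a) ^ (n - j) * real g ^ k * (real n - real g) ^ (n - k)))
               / (real n ^ n * d)"
      unfolding Vmat_entry[OF n a j] Vinv_entry[OF j g] d_def[symmetric]
        cancel[OF \<open>real (n choose j) \<noteq> 0\<close>] sum_distrib_left
      by (simp only: mult_ac)
  qed
  also have "\<dots> = (\<Prod>i\<in>{..<Suc n} - {g}. real a - real i) / d"
    using n g by (simp add: sum_divide_distrib[symmetric] sum_bezout_mat_monomials)
  also have "\<dots> = 1\<^sub>m (Suc n) $$ (a, g)"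
  proof (cases "a = g")
    case True
    then show ?thesis
      using g by (simp add: prod_diff_nodes d_def)
  next
    case False
    then have "a \<in> {..<Suc n} - {g}"
      using a by auto
    then have "(\<Prod>i\<in>{..<Suc n} - {g}. real a - real i) = 0"
      by (intro prod_zero) auto
    then show ?thesis
      using False a g by simp
  qed
  finally show "(Vmat n * Vinv n) $$ (a, g) = 1\<^sub>m (Suc n) $$ (a, g)" .
qed

lemma inverts_mat_diag:
  assumes "\<And>i. i < N \<Longrightarrow> f i * g i = (1::'a::semiring_1)"
  shows "inverts_mat (mat_diag N f) (mat_diag N g)"
  unfolding inverts_mat_def mat_diag_diag
  by (rule eq_matI) (auto simp: mat_diag_def assms)

theorem corollary2p8:
  fixes n :: nat
  assumes "n \<ge> 1"
  shows "inverts_mat (Dmat n) (Dinv n) \<and> inverts_mat (Dinv n) (Dmat n)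
    \<and> inverts_mat (Deltamat n) (Deltainv n) \<and> inverts_mat (Deltainv n) (Deltamat n)
    \<and> (let W = Deltainv n * (Htmat n * Tmat n - Hmat n * Ttmat n)
                * transpose_mat (Vtmat n) * Dinv n
       in inverts_mat (Vmat n) W \<and> inverts_mat W (Vmat n))"
proof -
  have "inverts_mat (Dmat n) (Dinv n)" "inverts_mat (Dinv n) (Dmat n)"
    unfolding Dmat_def Dinv_def by (auto intro!: inverts_mat_diag)
  moreover have "inverts_mat (Deltamat n) (Deltainv n)" "inverts_mat (Deltainv n) (Deltamat n)"
    unfolding Deltamat_def Deltainv_def by (auto intro!: inverts_mat_diag)
  moreover have VW: "Vmat n * Vinv n = 1\<^sub>m (Suc n)"
    using assms by (rule Vmat_mult_Vinv)
  moreover have "Vinv n * Vmat n = 1\<^sub>m (Suc n)"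
    using Vinv_carrier VW by (rule mat_mult_left_right_inverse[rotated])
      (simp add: Vmat_def)
  ultimately show ?thesis
    unfolding Let_def bezout_mat_def[symmetric] Vinv_def[symmetric] inverts_mat_def
    using carrier_matD(1)[OF Vinv_carrier[of n]] by simp
qed

end
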